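(* If $\gamma_*>0$ and $P[\mu_1,\mu_2]$ is a nonsingular matrix, then $\mathrm{rank}(\hat V(\gamma_* ))=2$, where $\hat V(\gamma_* )=[v_1(\gamma_* )\ \ v_2(\gamma_* )-\theta_*v_1(\gamma_* )]$ and $\theta_*=\frac{\gamma_*}{\mu_1-\mu_2}$.
   Context: Let $P(\lambda)=\sum_{j=0}^m A_j\lambda^j$ be an $n\times n$ matrix polynomial with $\det A_m\neq0$, let $\mu_1\neq\mu_2$ be complex numbers, $P[\mu_1,\mu_2]=\frac{P(\mu_1)-P(\mu_2)}{\mu_1-\mu_2}$, and $F[P(\mu_1,\mu_2);\gamma]=\begin{bmatrix} P(\mu_1) & 0\\ \gamma P[\mu_1,\mu_2] & P(\mu_2)\end{bmatrix}$. Let $\gamma_*$ be a point where $s_{2n-1}(F[P(\mu_1,\mu_2);\gamma])$ attains its maximum $s_*>0$ over $\gamma\ge0$. Let $\begin{bmatrix} u_1(\gamma_* )\\ u_2(\gamma_* )\end{bmatrix},\begin{bmatrix} v_1(\gamma_* )\\ v_2(\gamma_* )\end{bmatrix}$ ($u_k,v_k\in\mathbb{C}^n$) be a pair of left and right singular vectors of $s_*$ chosen such that $u_2(\gamma_* )^*P[\mu_1,\mu_2]v_1(\gamma_* )=0$, $u_2(\gamma_* )^*u_1(\gamma_* )=v_2(\gamma_* )^*v_1(\gamma_* )$, and $[u_1\ u_2]^*[u_1\ u_2]=[v_1\ v_2]^*[v_1\ v_2]$ at $\gamma_*$ (such a pair exists). *)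

theory Defs
  imports "Jordan_Normal_Form.Schur_Decomposition" "Jordan_Normal_Form.DL_Rank"
    "Jordan_Normal_Form.Char_Poly" "HOL-Library.Multiset"
begin

definition mpoly_eval :: "nat \<Rightarrow> (nat \<Rightarrow> complex mat) \<Rightarrow> nat \<Rightarrow> complex \<Rightarrow> complex mat" where
  "mpoly_eval n A m z = mat n n (\<lambda>(i,k). \<Sum>j\<le>m. z ^ j * A j $$ (i,k))"

definition mpoly_divdiff :: "nat \<Rightarrow> (nat \<Rightarrow> complex mat) \<Rightarrow> nat \<Rightarrow> complex \<Rightarrow> complex \<Rightarrow> complex mat" where
  "mpoly_divdiff n A m z1 z2 =
     (1 / (z1 - z2)) \<cdot>\<^sub>m (mpoly_eval n A m z1 - mpoly_eval n A m z2)"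

definition Fmat :: "nat \<Rightarrow> (nat \<Rightarrow> complex mat) \<Rightarrow> nat \<Rightarrow> complex \<Rightarrow> complex \<Rightarrow> real \<Rightarrow> complex mat" where
  "Fmat n A m z1 z2 g = four_block_mat (mpoly_eval n A m z1) (0\<^sub>m n n)
       (complex_of_real g \<cdot>\<^sub>m mpoly_divdiff n A m z1 z2) (mpoly_eval n A m z2)"

definition singular_values :: "complex mat \<Rightarrow> real list" where
  "singular_values B = rev (sorted_list_of_multiset
      (image_mset (\<lambda>z. sqrt (Re z)) (proots (char_poly (mat_adjoint B * B)))))"

definition sing_val :: "nat \<Rightarrow> complex mat \<Rightarrow> real" where
  "sing_val k B = singular_values B ! (k - 1)"

end

theory Submission
  imports Defs
begin

text \<open>Write \<open>P = P(\<mu>1)\<close>, \<open>D = P[\<mu>1,\<mu>2]\<close> and \<open>\<delta> = \<mu>1 - \<mu>2\<close>, so that \<open>P(\<mu>2) = P - \<delta> D\<close>. Since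
  \<open>[u1 u2]\<close> and \<open>[v1 v2]\<close> have the same Gram matrix, a relation \<open>v2 = \<alpha> v1\<close> transfers to
  \<open>u2 = \<alpha> u1\<close>. Substituted into \<open>F v = s u\<close> it gives \<open>(\<gamma> - \<alpha> \<delta>) D v1 = 0\<close>, hence \<open>\<gamma> = \<alpha> \<delta>\<close>;
  substituted into \<open>F\<^sup>* u = s v\<close> it then gives \<open>(\<gamma> \<alpha> + conj \<delta>) D\<^sup>* u1 = 0\<close>, where
  \<open>\<delta> (\<gamma> \<alpha> + conj \<delta>) = \<gamma>\<^sup>2 + |\<delta>|\<^sup>2 > 0\<close>. So \<open>u = 0\<close>, which is absurd; \<open>v1 = 0\<close> is excluded in the
  same way. Thus \<open>v1\<close>, \<open>v2\<close> are independent, and so are \<open>v1\<close> and \<open>v2 - \<theta> v1\<close>.\<close>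

lemma conjugate_diff: "conjugate (a - b) = conjugate a - conjugate (b :: 'a :: conjugatable_ring)"
  by (metis diff_conv_add_uminus conjugate_dist_add conjugate_neg)

lemma dim_mat_adjoint [simp]:
  "dim_row (mat_adjoint (M :: 'a :: conjugatable_field mat)) = dim_col M"
  "dim_col (mat_adjoint M) = dim_row M"
  unfolding mat_adjoint_def by simp_all

lemma mat_adjoint_carrier [simp]:
  "M \<in> carrier_mat nr nc \<Longrightarrow> mat_adjoint (M :: 'a :: conjugatable_field mat) \<in> carrier_mat nc nr"
  unfolding carrier_mat_def by simp

lemma index_mat_adjoint [simp]:
  "i < dim_col M \<Longrightarrow> j < dim_row M \<Longrightarrow>
   mat_adjoint (M :: 'a :: conjugatable_field mat) $$ (i, j) = conjugate (M $$ (j, i))"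
  unfolding mat_adjoint_def by (simp add: mat_of_rows_index)

lemma index_mat_adjoint_mult_self:
  assumes "i < dim_col M" "j < dim_col M"
  shows "(mat_adjoint M * M) $$ (i, j) = conjugate (col M i) \<bullet> (col M j :: 'a :: conjugatable_field vec)"
  using assms unfolding mat_adjoint_def by simp

lemma mat_adjoint_smult:
  "mat_adjoint (c \<cdot>\<^sub>m M) = conjugate c \<cdot>\<^sub>m mat_adjoint (M :: 'a :: conjugatable_field mat)"
  by (rule eq_matI) (simp_all add: conjugate_dist_mul)

lemma mat_adjoint_minus:
  assumes "A \<in> carrier_mat nr nc" "B \<in> carrier_mat nr nc"
  shows "mat_adjoint (A - B) = mat_adjoint A - mat_adjoint (B :: 'a :: conjugatable_field mat)"
  using assms by (intro eq_matI) (auto simp: conjugate_diff)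

lemma mat_adjoint_zero: "mat_adjoint (0\<^sub>m nr nc :: 'a :: conjugatable_field mat) = 0\<^sub>m nc nr"
  by (rule eq_matI) simp_all

lemma mat_adjoint_four_block_mat:
  assumes "A \<in> carrier_mat nr1 nc1" "B \<in> carrier_mat nr1 nc2"
    "C \<in> carrier_mat nr2 nc1" "D \<in> carrier_mat nr2 nc2"
  shows "mat_adjoint (four_block_mat A B C D :: 'a :: conjugatable_field mat) =
    four_block_mat (mat_adjoint A) (mat_adjoint C) (mat_adjoint B) (mat_adjoint D)"
  using assms by (intro eq_matI) auto

lemma conjugate_mat_adjoint_mult_vec:
  assumes "M \<in> carrier_mat nr nc" "x \<in> carrier_vec nr"
  shows "conjugate (mat_adjoint M *\<^sub>v x) = transpose_mat M *\<^sub>v conjugate (x :: 'a :: conjugatable_field vec)"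
  using assms by (intro eq_vecI) (auto simp: scalar_prod_def sum_conjugate conjugate_dist_mul)

lemma mat_adjoint_mult_vec_eq_0_iff:
  assumes "M \<in> carrier_mat n n" "det M \<noteq> 0" "x \<in> carrier_vec n"
  shows "mat_adjoint M *\<^sub>v x = 0\<^sub>v n \<longleftrightarrow> x = (0\<^sub>v n :: 'a :: conjugatable_field vec)"
proof
  assume "mat_adjoint M *\<^sub>v x = 0\<^sub>v n"
  then have "transpose_mat M *\<^sub>v conjugate x = 0\<^sub>v n"
    using conjugate_mat_adjoint_mult_vec[OF assms(1,3)] by simp
  moreover have "det (transpose_mat M) \<noteq> 0"
    using assms(1,2) by (simp add: det_transpose)
  ultimately have "conjugate x = 0\<^sub>v n"
    using det_0_iff_vec_prod_zero[of "transpose_mat M" n] assms(1,3) carrier_vec_conjugate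
    by fastforce
  then show "x = 0\<^sub>v n"
    by (metis conjugate_zero_iff_vec)
qed (use assms(1) in auto)

lemma smult_mat_mult_vec:
  assumes "A \<in> carrier_mat nr nc" "v \<in> carrier_vec nc"
  shows "(k \<cdot>\<^sub>m A) *\<^sub>v v = k \<cdot>\<^sub>v (A *\<^sub>v (v :: 'a :: comm_semiring_0 vec))"
  using assms by (intro eq_vecI) (auto simp: scalar_prod_def sum_distrib_left mult.assoc)

lemma smult_append_vec: "c \<cdot>\<^sub>v (x @\<^sub>v y) = (c \<cdot>\<^sub>v x) @\<^sub>v (c \<cdot>\<^sub>v (y :: 'a :: times vec))"
  by (rule eq_vecI) auto

lemma four_block_mat_mult_append_vec_eq_iff:
  assumes "A \<in> carrier_mat nr1 nc1" "B \<in> carrier_mat nr1 nc2"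
    "C \<in> carrier_mat nr2 nc1" "D \<in> carrier_mat nr2 nc2"
    "x1 \<in> carrier_vec nc1" "x2 \<in> carrier_vec nc2" "y1 \<in> carrier_vec nr1"
  shows "four_block_mat A B C D *\<^sub>v (x1 @\<^sub>v x2) = c \<cdot>\<^sub>v (y1 @\<^sub>v y2) \<longleftrightarrow>
    A *\<^sub>v x1 + B *\<^sub>v x2 = c \<cdot>\<^sub>v y1 \<and> C *\<^sub>v x1 + D *\<^sub>v x2 = c \<cdot>\<^sub>v (y2 :: 'a :: semiring_0 vec)"
  using assms by (simp add: four_block_mat_mult_vec smult_append_vec append_vec_eq[of _ nr1])

lemma cscalar_prod_self_eq_0_iff:
  "x \<in> carrier_vec n \<Longrightarrow> conjugate x \<bullet> x = 0 \<longleftrightarrow> x = (0\<^sub>v n :: complex vec)"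
  by (metis carrier_vec_conjugate comm_scalar_prod conjugate_square_eq_0_vec)

lemma cscalar_prod_diff_smult:
  assumes "x \<in> carrier_vec n" "y \<in> carrier_vec n"
  shows "conjugate (y - a \<cdot>\<^sub>v x) \<bullet> (y - a \<cdot>\<^sub>v x) =
    conjugate y \<bullet> y - a * (conjugate y \<bullet> x) - cnj a * (conjugate x \<bullet> y)
    + a * cnj a * (conjugate x \<bullet> (x :: complex vec))"
  using assms
  by (simp add: scalar_prod_def sum_subtractf sum.distrib sum_distrib_left algebra_simps)

lemma cscalar_prod_mat_of_cols_gram:
  assumes "set xs \<subseteq> carrier_vec n" "i < length xs" "j < length xs"
  shows "(mat_adjoint (mat_of_cols n xs) * mat_of_cols n xs) $$ (i, j) =
    conjugate (xs ! i) \<bullet> (xs ! j :: 'a :: conjugatable_field vec)"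
proof -
  have "xs ! i \<in> carrier_vec n" "xs ! j \<in> carrier_vec n"
    using assms nth_mem by blast+
  then show ?thesis
    using assms by (subst index_mat_adjoint_mult_self) auto
qed

lemma of_real_mult_add_cnj_neq_0:
  assumes "\<gamma> > 0" "of_real \<gamma> = \<alpha> * \<delta>"
  shows "of_real \<gamma> * \<alpha> + cnj \<delta> \<noteq> 0"
proof -
  have "\<delta> * (of_real \<gamma> * \<alpha> + cnj \<delta>) = of_real \<gamma> * of_real \<gamma> + \<delta> * cnj \<delta>"
    using assms(2) by (simp add: algebra_simps)
  also have "\<dots> = of_real (\<gamma> * \<gamma> + ((Re \<delta>)\<^sup>2 + (Im \<delta>)\<^sup>2))"
    by (simp add: complex_mult_cnj)
  finally have "\<delta> * (of_real \<gamma> * \<alpha> + cnj \<delta>) = of_real (\<gamma> * \<gamma> + ((Re \<delta>)\<^sup>2 + (Im \<delta>)\<^sup>2))" .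
  moreover have "\<gamma> * \<gamma> + ((Re \<delta>)\<^sup>2 + (Im \<delta>)\<^sup>2) \<noteq> 0"
    using assms(1) by (intro order.strict_implies_not_eq[symmetric] add_pos_nonneg) simp_all
  ultimately show "of_real \<gamma> * \<alpha> + cnj \<delta> \<noteq> 0"
    by (metis mult_zero_right of_real_eq_0_iff)
qed

locale block_singular_pair =
  fixes n :: nat and P D :: "complex mat" and \<delta> s :: complex and \<gamma> :: real
    and u1 u2 v1 v2 :: "complex vec"
  assumes P_carrier: "P \<in> carrier_mat n n" and D_carrier: "D \<in> carrier_mat n n"
    and vec_carrier: "u1 \<in> carrier_vec n" "u2 \<in> carrier_vec n" "v1 \<in> carrier_vec n" "v2 \<in> carrier_vec n"
    and D_nonsingular: "det D \<noteq> 0"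
    and \<gamma>_pos: "\<gamma> > 0"
    and right_sv: "four_block_mat P (0\<^sub>m n n) (of_real \<gamma> \<cdot>\<^sub>m D) (P - \<delta> \<cdot>\<^sub>m D) *\<^sub>v (v1 @\<^sub>v v2)
      = s \<cdot>\<^sub>v (u1 @\<^sub>v u2)"
    and left_sv: "mat_adjoint (four_block_mat P (0\<^sub>m n n) (of_real \<gamma> \<cdot>\<^sub>m D) (P - \<delta> \<cdot>\<^sub>m D))
      *\<^sub>v (u1 @\<^sub>v u2) = s \<cdot>\<^sub>v (v1 @\<^sub>v v2)"
    and gram: "mat_adjoint (mat_of_cols n [u1, u2]) * mat_of_cols n [u1, u2]
      = mat_adjoint (mat_of_cols n [v1, v2]) * mat_of_cols n [v1, v2]"
    and u_nonzero: "u1 @\<^sub>v u2 \<noteq> 0\<^sub>v (n + n)"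
begin

lemma right_sv_index:
  assumes "i < n"
  shows "(P *\<^sub>v v1) $ i = s * u1 $ i"
    and "\<gamma> * (D *\<^sub>v v1) $ i + (P *\<^sub>v v2) $ i - \<delta> * (D *\<^sub>v v2) $ i = s * u2 $ i"
proof -
  have "P *\<^sub>v v1 + 0\<^sub>m n n *\<^sub>v v2 = s \<cdot>\<^sub>v u1
      \<and> (of_real \<gamma> \<cdot>\<^sub>m D) *\<^sub>v v1 + (P - \<delta> \<cdot>\<^sub>m D) *\<^sub>v v2 = s \<cdot>\<^sub>v u2"
    using right_sv P_carrier D_carrier vec_carrier
    by (subst (asm) four_block_mat_mult_append_vec_eq_iff[of _ n n _ n _ n]) auto
  then show "(P *\<^sub>v v1) $ i = s * u1 $ i"
    and "\<gamma> * (D *\<^sub>v v1) $ i + (P *\<^sub>v v2) $ i - \<delta> * (D *\<^sub>v v2) $ i = s * u2 $ i"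
    using assms P_carrier D_carrier vec_carrier
    by (auto dest!: arg_cong[where f = "\<lambda>x. x $ i"]
        simp: smult_mat_mult_vec minus_mult_distrib_mat_vec add_diff_eq)
qed

lemma left_sv_index:
  assumes "i < n"
  shows "(mat_adjoint P *\<^sub>v u1) $ i + \<gamma> * (mat_adjoint D *\<^sub>v u2) $ i = s * v1 $ i"
    and "(mat_adjoint P *\<^sub>v u2) $ i - cnj \<delta> * (mat_adjoint D *\<^sub>v u2) $ i = s * v2 $ i"
proof -
  have adjoint_block: "mat_adjoint (four_block_mat P (0\<^sub>m n n) (of_real \<gamma> \<cdot>\<^sub>m D) (P - \<delta> \<cdot>\<^sub>m D)) =
      four_block_mat (mat_adjoint P) (of_real \<gamma> \<cdot>\<^sub>m mat_adjoint D) (0\<^sub>m n n)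
        (mat_adjoint P - cnj \<delta> \<cdot>\<^sub>m mat_adjoint D)"
    using P_carrier D_carrier
    by (subst mat_adjoint_four_block_mat[of _ n n _ n _ n])
      (auto simp: mat_adjoint_zero mat_adjoint_smult mat_adjoint_minus[of _ n n])
  have "mat_adjoint P *\<^sub>v u1 + (of_real \<gamma> \<cdot>\<^sub>m mat_adjoint D) *\<^sub>v u2 = s \<cdot>\<^sub>v v1
      \<and> 0\<^sub>m n n *\<^sub>v u1 + (mat_adjoint P - cnj \<delta> \<cdot>\<^sub>m mat_adjoint D) *\<^sub>v u2 = s \<cdot>\<^sub>v v2"
    using left_sv[unfolded adjoint_block] P_carrier D_carrier vec_carrier
    by (subst (asm) four_block_mat_mult_append_vec_eq_iff[of _ n n _ n _ n]) auto
  then show "(mat_adjoint P *\<^sub>v u1) $ i + \<gamma> * (mat_adjoint D *\<^sub>v u2) $ i = s * v1 $ i"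
    and "(mat_adjoint P *\<^sub>v u2) $ i - cnj \<delta> * (mat_adjoint D *\<^sub>v u2) $ i = s * v2 $ i"
    using assms P_carrier D_carrier vec_carrier
    by (auto dest!: arg_cong[where f = "\<lambda>x. x $ i"]
        simp: smult_mat_mult_vec minus_mult_distrib_mat_vec[of _ n n])
qed

lemma gram_cscalar_prod:
  "conjugate u1 \<bullet> u1 = conjugate v1 \<bullet> v1" "conjugate u1 \<bullet> u2 = conjugate v1 \<bullet> v2"
  "conjugate u2 \<bullet> u1 = conjugate v2 \<bullet> v1" "conjugate u2 \<bullet> u2 = conjugate v2 \<bullet> v2"
proof -
  have "conjugate ([u1, u2] ! i) \<bullet> [u1, u2] ! j = conjugate ([v1, v2] ! i) \<bullet> [v1, v2] ! j"
    if "i < 2" "j < 2" for i j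
    using gram vec_carrier that cscalar_prod_mat_of_cols_gram[of "[u1, u2]" n i j]
      cscalar_prod_mat_of_cols_gram[of "[v1, v2]" n i j]
    by simp
  from this[of 0 0] this[of 0 1] this[of 1 0] this[of 1 1] show
    "conjugate u1 \<bullet> u1 = conjugate v1 \<bullet> v1" "conjugate u1 \<bullet> u2 = conjugate v1 \<bullet> v2"
    "conjugate u2 \<bullet> u1 = conjugate v2 \<bullet> v1" "conjugate u2 \<bullet> u2 = conjugate v2 \<bullet> v2"
    by simp_all
qed

lemma u1_or_u2_nonzero: "u1 \<noteq> 0\<^sub>v n \<or> u2 \<noteq> 0\<^sub>v n"
  using u_nonzero by (auto intro: eq_vecI)

lemma v1_nonzero: "v1 \<noteq> 0\<^sub>v n"
proof
  assume v1: "v1 = 0\<^sub>v n"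
  then have u1: "u1 = 0\<^sub>v n"
    using gram_cscalar_prod(1) vec_carrier cscalar_prod_self_eq_0_iff by auto
  have "mat_adjoint D *\<^sub>v u2 = 0\<^sub>v n"
  proof (rule eq_vecI)
    fix i assume "i < dim_vec (0\<^sub>v n :: complex vec)"
    then have "i < n" by simp
    then show "(mat_adjoint D *\<^sub>v u2) $ i = 0\<^sub>v n $ i"
      using left_sv_index(1)[of i] u1 v1 \<gamma>_pos P_carrier by simp
  qed (use D_carrier in simp)
  then have "u2 = 0\<^sub>v n"
    using mat_adjoint_mult_vec_eq_0_iff D_carrier D_nonsingular vec_carrier by blast
  with u1 u1_or_u2_nonzero show False by simp
qed

lemma u2_eq_smult_if_v2_eq_smult:
  assumes "v2 = \<alpha> \<cdot>\<^sub>v v1"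
  shows "u2 = \<alpha> \<cdot>\<^sub>v u1"
proof -
  have "conjugate (u2 - \<alpha> \<cdot>\<^sub>v u1) \<bullet> (u2 - \<alpha> \<cdot>\<^sub>v u1) = conjugate (v2 - \<alpha> \<cdot>\<^sub>v v1) \<bullet> (v2 - \<alpha> \<cdot>\<^sub>v v1)"
    using vec_carrier by (simp add: cscalar_prod_diff_smult gram_cscalar_prod)
  also have "v2 - \<alpha> \<cdot>\<^sub>v v1 = 0\<^sub>v n"
    using assms vec_carrier by (intro eq_vecI) auto
  finally have diff: "u2 - \<alpha> \<cdot>\<^sub>v u1 = 0\<^sub>v n"
    using vec_carrier cscalar_prod_self_eq_0_iff[of "u2 - \<alpha> \<cdot>\<^sub>v u1" n] by simp
  have "u2 $ i = \<alpha> * u1 $ i" if "i < n" for i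
    using arg_cong[OF diff, of "\<lambda>x. x $ i"] that vec_carrier by simp
  then show ?thesis
    using vec_carrier by (intro eq_vecI) auto
qed

lemma D_mult_vec_eq_0_iff: "x \<in> carrier_vec n \<Longrightarrow> D *\<^sub>v x = 0\<^sub>v n \<longleftrightarrow> x = 0\<^sub>v n"
  using det_0_iff_vec_prod_zero[OF D_carrier] D_nonsingular D_carrier by auto

lemma \<gamma>_eq_if_v2_eq_smult:
  assumes v2: "v2 = \<alpha> \<cdot>\<^sub>v v1"
  shows "of_real \<gamma> = \<alpha> * \<delta>"
proof (rule ccontr)
  assume ne: "of_real \<gamma> \<noteq> \<alpha> * \<delta>"
  have u2: "u2 = \<alpha> \<cdot>\<^sub>v u1"
    using u2_eq_smult_if_v2_eq_smult[OF v2] .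
  have "D *\<^sub>v v1 = 0\<^sub>v n"
  proof (rule eq_vecI)
    fix i assume "i < dim_vec (0\<^sub>v n :: complex vec)"
    then have i: "i < n" by simp
    have "of_real \<gamma> * (D *\<^sub>v v1) $ i + \<alpha> * (P *\<^sub>v v1) $ i - \<delta> * (\<alpha> * (D *\<^sub>v v1) $ i)
        = s * (\<alpha> * u1 $ i)"
      using right_sv_index(2)[OF i] i v2 u2 vec_carrier P_carrier D_carrier
      by (simp add: mult_mat_vec)
    then have "(of_real \<gamma> - \<alpha> * \<delta>) * (D *\<^sub>v v1) $ i = 0"
      using right_sv_index(1)[OF i] by (simp add: algebra_simps)
    then show "(D *\<^sub>v v1) $ i = 0\<^sub>v n $ i"
      using ne i by simp
  qed (use D_carrier in simp)
  then show False
    using D_mult_vec_eq_0_iff v1_nonzero vec_carrier by blast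
qed

lemma u1_eq_0_if_v2_eq_smult:
  assumes v2: "v2 = \<alpha> \<cdot>\<^sub>v v1"
  shows "u1 = 0\<^sub>v n"
proof -
  have u2: "u2 = \<alpha> \<cdot>\<^sub>v u1"
    using u2_eq_smult_if_v2_eq_smult[OF v2] .
  have \<gamma>: "of_real \<gamma> = \<alpha> * \<delta>"
    using \<gamma>_eq_if_v2_eq_smult[OF v2] .
  then have "\<alpha> \<noteq> 0"
    using \<gamma>_pos by auto
  have coeff: "of_real \<gamma> * \<alpha> + cnj \<delta> \<noteq> 0"
    using \<gamma>_pos \<gamma> by (rule of_real_mult_add_cnj_neq_0)
  have "mat_adjoint D *\<^sub>v u1 = 0\<^sub>v n"
  proof (rule eq_vecI)
    fix i assume "i < dim_vec (0\<^sub>v n :: complex vec)"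
    then have i: "i < n" by simp
    let ?p = "(mat_adjoint P *\<^sub>v u1) $ i" and ?d = "(mat_adjoint D *\<^sub>v u1) $ i"
    have e1: "?p + of_real \<gamma> * (\<alpha> * ?d) = s * v1 $ i"
      and e2: "\<alpha> * ?p - cnj \<delta> * (\<alpha> * ?d) = s * (\<alpha> * v1 $ i)"
      using left_sv_index[OF i] i v2 u2 vec_carrier P_carrier D_carrier
      by (simp_all add: mult_mat_vec)
    have "\<alpha> * ((of_real \<gamma> * \<alpha> + cnj \<delta>) * ?d)
        = \<alpha> * (?p + of_real \<gamma> * (\<alpha> * ?d)) - (\<alpha> * ?p - cnj \<delta> * (\<alpha> * ?d))"
      by (simp add: algebra_simps)
    also have "\<dots> = 0"
      unfolding e1 e2 by simp
    finally have "\<alpha> * ((of_real \<gamma> * \<alpha> + cnj \<delta>) * ?d) = 0" .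
    then show "(mat_adjoint D *\<^sub>v u1) $ i = 0\<^sub>v n $ i"
      using \<open>\<alpha> \<noteq> 0\<close> coeff i by simp
  qed (use D_carrier in simp)
  then show ?thesis
    using mat_adjoint_mult_vec_eq_0_iff D_carrier D_nonsingular vec_carrier by blast
qed

lemma v2_not_smult_v1: "v2 \<noteq> \<alpha> \<cdot>\<^sub>v v1"
proof
  assume v2: "v2 = \<alpha> \<cdot>\<^sub>v v1"
  then have "u1 = 0\<^sub>v n"
    by (rule u1_eq_0_if_v2_eq_smult)
  moreover from this have "u2 = 0\<^sub>v n"
    using u2_eq_smult_if_v2_eq_smult[OF v2] by auto
  ultimately show False
    using u1_or_u2_nonzero by simp
qed

end

lemma rank_mat_of_cols_two:
  fixes v w :: "'a :: field vec"
  assumes v: "v \<in> carrier_vec n" and w: "w \<in> carrier_vec n"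
    and v_nonzero: "v \<noteq> 0\<^sub>v n" and w_not_smult: "\<And>\<alpha>. w \<noteq> \<alpha> \<cdot>\<^sub>v v"
  shows "vec_space.rank n (mat_of_cols n [v, w]) = 2"
proof -
  interpret vec_space "TYPE('a)" n .
  have "v \<noteq> w"
    using w_not_smult[of 1] by auto
  have "lin_indpt {v, w}"
  proof (rule finite_lin_indpt2)
    fix a assume "lincomb a {v, w} = 0\<^sub>v n"
    moreover have "lincomb a {v, w} = a v \<cdot>\<^sub>v v + (a w \<cdot>\<^sub>v w + 0\<^sub>v n)"
      using lincomb_as_lincomb_list_distinct[of "[v, w]" a] v w \<open>v \<noteq> w\<close> by simp
    ultimately have comb: "a v * v $ i + a w * w $ i = 0" if "i < n" for i
      using that v w by (auto dest!: arg_cong[where f = "\<lambda>x. x $ i"])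
    have "a w = 0"
    proof (rule ccontr)
      assume "a w \<noteq> 0"
      then have "w = (- a v / a w) \<cdot>\<^sub>v v"
        using comb v w by (intro eq_vecI) (auto simp: field_simps eq_neg_iff_add_eq_0)
      with w_not_smult show False by blast
    qed
    moreover have "a v = 0"
    proof (rule ccontr)
      assume "a v \<noteq> 0"
      then have "v = 0\<^sub>v n"
        using comb \<open>a w = 0\<close> v by (intro eq_vecI) auto
      with v_nonzero show False ..
    qed
    ultimately show "\<forall>x \<in> {v, w}. a x = 0"
      by simp
  qed (use v w in auto)
  then show ?thesis
    using \<open>v \<noteq> w\<close> v w by (intro lin_indpt_full_rank[of _ 2]) auto
qed

lemma mpoly_eval_eq_minus_divdiff:
  assumes "\<mu>1 \<noteq> \<mu>2"
  shows "mpoly_eval n A m \<mu>2 = mpoly_eval n A m \<mu>1 - (\<mu>1 - \<mu>2) \<cdot>\<^sub>m mpoly_divdiff n A m \<mu>1 \<mu>2"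
  using assms by (intro eq_matI) (auto simp: mpoly_eval_def mpoly_divdiff_def)

lemma Fmat_eq_four_block_mat:
  assumes "\<mu>1 \<noteq> \<mu>2"
  shows "Fmat n A m \<mu>1 \<mu>2 \<gamma> = four_block_mat (mpoly_eval n A m \<mu>1) (0\<^sub>m n n)
    (of_real \<gamma> \<cdot>\<^sub>m mpoly_divdiff n A m \<mu>1 \<mu>2)
    (mpoly_eval n A m \<mu>1 - (\<mu>1 - \<mu>2) \<cdot>\<^sub>m mpoly_divdiff n A m \<mu>1 \<mu>2)"
  unfolding Fmat_def using mpoly_eval_eq_minus_divdiff[OF assms] by simp

theorem corollary2:
  fixes n m :: nat and A :: "nat \<Rightarrow> complex mat" and \<mu>1 \<mu>2 :: complex
    and \<gamma>s ss :: real and u1 u2 v1 v2 :: "complex vec"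
  assumes n_pos: "n \<ge> 1"
    and A_dim: "\<And>j. j \<le> m \<Longrightarrow> A j \<in> carrier_mat n n"
    and lead: "det (A m) \<noteq> 0"
    and mu_ne: "\<mu>1 \<noteq> \<mu>2"
    and gs_nonneg: "\<gamma>s \<ge> 0"
    and gs_max: "\<And>\<gamma>. \<gamma> \<ge> 0 \<Longrightarrow>
        sing_val (2*n - 1) (Fmat n A m \<mu>1 \<mu>2 \<gamma>) \<le> sing_val (2*n - 1) (Fmat n A m \<mu>1 \<mu>2 \<gamma>s)"
    and ss_def: "ss = sing_val (2*n - 1) (Fmat n A m \<mu>1 \<mu>2 \<gamma>s)"
    and ss_pos: "ss > 0"
    and dims: "u1 \<in> carrier_vec n" "u2 \<in> carrier_vec n" "v1 \<in> carrier_vec n" "v2 \<in> carrier_vec n"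
    and right_sv: "Fmat n A m \<mu>1 \<mu>2 \<gamma>s *\<^sub>v (v1 @\<^sub>v v2) = complex_of_real ss \<cdot>\<^sub>v (u1 @\<^sub>v u2)"
    and left_sv: "mat_adjoint (Fmat n A m \<mu>1 \<mu>2 \<gamma>s) *\<^sub>v (u1 @\<^sub>v u2) = complex_of_real ss \<cdot>\<^sub>v (v1 @\<^sub>v v2)"
    and u_unit: "conjugate (u1 @\<^sub>v u2) \<bullet> (u1 @\<^sub>v u2) = 1"
    and v_unit: "conjugate (v1 @\<^sub>v v2) \<bullet> (v1 @\<^sub>v v2) = 1"
    and c1: "conjugate u2 \<bullet> (mpoly_divdiff n A m \<mu>1 \<mu>2 *\<^sub>v v1) = 0"
    and c2: "conjugate u2 \<bullet> u1 = conjugate v2 \<bullet> v1"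
    and c3: "mat_adjoint (mat_of_cols n [u1, u2]) * mat_of_cols n [u1, u2]
           = mat_adjoint (mat_of_cols n [v1, v2]) * mat_of_cols n [v1, v2]"
    and gs_pos: "\<gamma>s > 0"
    and nonsing: "det (mpoly_divdiff n A m \<mu>1 \<mu>2) \<noteq> 0"
  shows "vec_space.rank n
           (mat_of_cols n [v1, v2 - (complex_of_real \<gamma>s / (\<mu>1 - \<mu>2)) \<cdot>\<^sub>v v1]) = 2"
proof -
  \<comment> \<open>Besides the singular-vector equations only \<open>c3\<close>, \<open>u \<noteq> 0\<close>, \<open>\<gamma>s > 0\<close> and the invertibility
    of \<open>P[\<mu>1,\<mu>2]\<close> are used.\<close>
  have "u1 @\<^sub>v u2 \<noteq> 0\<^sub>v (n + n)"
    using u_unit by auto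
  then interpret block_singular_pair n "mpoly_eval n A m \<mu>1" "mpoly_divdiff n A m \<mu>1 \<mu>2"
    "\<mu>1 - \<mu>2" "of_real ss" \<gamma>s u1 u2 v1 v2
    using dims right_sv left_sv c3 gs_pos nonsing Fmat_eq_four_block_mat[OF mu_ne]
    by unfold_locales (auto simp: mpoly_eval_def mpoly_divdiff_def)
  let ?\<theta> = "complex_of_real \<gamma>s / (\<mu>1 - \<mu>2)"
  have "v2 - ?\<theta> \<cdot>\<^sub>v v1 \<noteq> \<alpha> \<cdot>\<^sub>v v1" for \<alpha>
  proof
    assume shifted: "v2 - ?\<theta> \<cdot>\<^sub>v v1 = \<alpha> \<cdot>\<^sub>v v1"
    have "v2 $ i = (\<alpha> + ?\<theta>) * v1 $ i" if "i < n" for i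
      using arg_cong[OF shifted, of "\<lambda>x. x $ i"] that dims by (simp add: algebra_simps)
    then have "v2 = (\<alpha> + ?\<theta>) \<cdot>\<^sub>v v1"
      using dims by (intro eq_vecI) auto
    with v2_not_smult_v1 show False by blast
  qed
  then show ?thesis
    using dims v1_nonzero by (intro rank_mat_of_cols_two) auto
qed

end
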